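(* Every connected graph that contains no induced subgraph isomorphic to $P_4$ and no induced subgraph isomorphic to $2K_2$ is detour covered.
   Context: All graphs are finite and simple. $P_4$ is the path on $4$ vertices and $2K_2$ is the graph consisting of two vertex-disjoint edges. A detour of a graph is a longest path in it; a graph is detour covered if every vertex lies in some detour. *)

theory Defs
  imports Main
begin

definition simple_graph :: "'a set \<Rightarrow> ('a \<Rightarrow> 'a \<Rightarrow> bool) \<Rightarrow> bool" where
  "simple_graph V E \<longleftrightarrow> finite V \<and> (\<forall>x y. E x y \<longrightarrow> x \<in> V \<and> y \<in> V)
     \<and> (\<forall>x y. E x y \<longrightarrow> E y x) \<and> (\<forall>x. \<not> E x x)"

definition is_path :: "'a set \<Rightarrow> ('a \<Rightarrow> 'a \<Rightarrow> bool) \<Rightarrow> 'a list \<Rightarrow> bool" where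
  "is_path V E p \<longleftrightarrow> p \<noteq> [] \<and> distinct p \<and> set p \<subseteq> V
     \<and> (\<forall>i. Suc i < length p \<longrightarrow> E (p ! i) (p ! Suc i))"

definition connected_graph :: "'a set \<Rightarrow> ('a \<Rightarrow> 'a \<Rightarrow> bool) \<Rightarrow> bool" where
  "connected_graph V E \<longleftrightarrow> (\<forall>u\<in>V. \<forall>v\<in>V. \<exists>p. is_path V E p \<and> hd p = u \<and> last p = v)"

definition is_detour :: "'a set \<Rightarrow> ('a \<Rightarrow> 'a \<Rightarrow> bool) \<Rightarrow> 'a list \<Rightarrow> bool" where
  "is_detour V E p \<longleftrightarrow> is_path V E p \<and> (\<forall>q. is_path V E q \<longrightarrow> length q \<le> length p)"

definition detour_covered :: "'a set \<Rightarrow> ('a \<Rightarrow> 'a \<Rightarrow> bool) \<Rightarrow> bool" where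
  "detour_covered V E \<longleftrightarrow> (\<forall>v\<in>V. \<exists>p. is_detour V E p \<and> v \<in> set p)"

definition has_induced :: "'a set \<Rightarrow> ('a \<Rightarrow> 'a \<Rightarrow> bool) \<Rightarrow> 'b set \<Rightarrow> ('b \<Rightarrow> 'b \<Rightarrow> bool) \<Rightarrow> bool" where
  "has_induced V E W F \<longleftrightarrow> (\<exists>f. inj_on f W \<and> f ` W \<subseteq> V
     \<and> (\<forall>x\<in>W. \<forall>y\<in>W. E (f x) (f y) \<longleftrightarrow> F x y))"

definition P4_V :: "nat set" where "P4_V = {0,1,2,3}"
definition P4_E :: "nat \<Rightarrow> nat \<Rightarrow> bool" where
  "P4_E x y \<longleftrightarrow> x \<in> P4_V \<and> y \<in> P4_V \<and> (x = y + 1 \<or> y = x + 1)"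

definition K2K2_V :: "nat set" where "K2K2_V = {0,1,2,3}"
definition K2K2_E :: "nat \<Rightarrow> nat \<Rightarrow> bool" where
  "K2K2_E x y \<longleftrightarrow> {x, y} = {0, 1} \<or> {x, y} = {2, 3::nat}"

end

theory Submission
  imports Defs
begin

(* Let P be a longest path and v a vertex off P. By connectivity v has a neighbour w, and v
   even has a neighbour on P: otherwise the edges v w and P_0 P_1 would span an induced 2K2,
   as w adjacent to P_0 or P_1 would give a path longer than P.
   So let v be adjacent to P_j, and let P_m be its next neighbour on P (or m = |P|). If
   m <= j + 2, the path P_0 .. P_j v P_m .. through v misses at most one vertex of P, and so
   does v P_j P_(j+1) .. when j <= 1. Otherwise P4-freeness makes P_j adjacent to all of
   P_(j+1) .. P_(m-1), and the disjoint edges P_(j-2) P_(j-1) and P_(j+1) P_(j+2) are joined by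
   an edge P_(s-1) P_t other than P_(j-2) P_(j+2) (else there is an induced 2K2 or P4); then
   P_0 .. P_(s-1) P_t .. P_(m-1) P_j v P_m .. is a path through v missing at most one vertex. *)

lemma is_path_iff_successively:
  "is_path V E p \<longleftrightarrow> p \<noteq> [] \<and> distinct p \<and> set p \<subseteq> V \<and> successively E p"
  by (simp add: is_path_def successively_conv_nth)

lemma simple_graph_sym: "simple_graph V E \<Longrightarrow> E x y \<Longrightarrow> E y x"
  and simple_graph_irrefl: "simple_graph V E \<Longrightarrow> \<not> E x x"
  and simple_graph_in_V: "simple_graph V E \<Longrightarrow> E x y \<Longrightarrow> x \<in> V \<and> y \<in> V"
  by (auto simp: simple_graph_def)

lemma length_path_le_card:
  assumes "simple_graph V E" "is_path V E p"
  shows "length p \<le> card V"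
proof -
  have "length p = card (set p)"
    using assms(2) by (simp add: is_path_def distinct_card)
  also have "\<dots> \<le> card V"
    using assms by (intro card_mono) (auto simp: simple_graph_def is_path_def)
  finally show ?thesis .
qed

lemma exists_detour:
  assumes "simple_graph V E" "V \<noteq> {}"
  shows "\<exists>P. is_detour V E P"
proof -
  obtain x where "x \<in> V"
    using assms(2) by blast
  then have "is_path V E [x]"
    by (simp add: is_path_def)
  moreover have "\<forall>q. is_path V E q \<longrightarrow> length q < Suc (card V)"
    using length_path_le_card[OF assms(1)] by (simp add: less_Suc_eq_le)
  ultimately show ?thesis
    unfolding is_detour_def by (metis Lattices_Big.ex_has_greatest_nat)
qed

lemma connected_graph_has_neighbour:
  assumes "connected_graph V E" "u \<in> V" "v \<in> V" "u \<noteq> v"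
  shows "\<exists>w. E v w"
proof -
  obtain p where p: "is_path V E p" "hd p = v" "last p = u"
    using assms(1-3) unfolding connected_graph_def by blast
  then obtain w q where "p = v # w # q"
    using assms(4) by (cases p rule: remdups_adj.cases) (auto simp: is_path_def)
  then show ?thesis
    using p(1) by (auto simp: is_path_iff_successively)
qed

lemma has_induced_P4I:
  assumes "simple_graph V E" "distinct [a, b, c, d]" "{a, b, c, d} \<subseteq> V"
    "E a b" "E b c" "E c d" "\<not> E a c" "\<not> E a d" "\<not> E b d"
  shows "has_induced V E P4_V P4_E"
  unfolding has_induced_def
proof (intro exI[of _ "(!) [a, b, c, d]"] conjI)
  show "inj_on ((!) [a, b, c, d]) P4_V"
    using assms(2) by (auto simp: P4_V_def inj_on_def)
  show "(!) [a, b, c, d] ` P4_V \<subseteq> V"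
    using assms(3) by (auto simp: P4_V_def)
  show "\<forall>x\<in>P4_V. \<forall>y\<in>P4_V. E ([a, b, c, d] ! x) ([a, b, c, d] ! y) = P4_E x y"
    using assms(4-9) simple_graph_sym[OF assms(1)] simple_graph_irrefl[OF assms(1)]
    by (auto simp: P4_E_def P4_V_def)
qed

lemma has_induced_2K2I:
  assumes "simple_graph V E" "distinct [a, b, c, d]" "{a, b, c, d} \<subseteq> V"
    "E a b" "E c d" "\<not> E a c" "\<not> E a d" "\<not> E b c" "\<not> E b d"
  shows "has_induced V E K2K2_V K2K2_E"
  unfolding has_induced_def
proof (intro exI[of _ "(!) [a, b, c, d]"] conjI)
  show "inj_on ((!) [a, b, c, d]) K2K2_V"
    using assms(2) by (auto simp: K2K2_V_def inj_on_def)
  show "(!) [a, b, c, d] ` K2K2_V \<subseteq> V"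
    using assms(3) by (auto simp: K2K2_V_def)
  show "\<forall>x\<in>K2K2_V. \<forall>y\<in>K2K2_V. E ([a, b, c, d] ! x) ([a, b, c, d] ! y) = K2K2_E x y"
    using assms(4-9) simple_graph_sym[OF assms(1)] simple_graph_irrefl[OF assms(1)]
    by (auto simp: K2K2_E_def K2K2_V_def doubleton_eq_iff)
qed

lemma disjoint_edges_joined_if_2K2_free:
  assumes "simple_graph V E" "\<not> has_induced V E K2K2_V K2K2_E"
    "distinct [a, b, c, d]" "E a b" "E c d"
  shows "E a c \<or> E a d \<or> E b c \<or> E b d"
  using has_induced_2K2I[of V E a b c d] assms simple_graph_in_V[OF assms(1)] by auto

lemma disjoint_edges_joined_if_P4_2K2_free:
  assumes "simple_graph V E" "\<not> has_induced V E P4_V P4_E" "\<not> has_induced V E K2K2_V K2K2_E"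
    "distinct [a, b, c, d]" "E a b" "E c d"
  shows "E b c \<or> E b d \<or> E a c"
  using disjoint_edges_joined_if_2K2_free[OF assms(1,3-6)] has_induced_P4I[of V E b a d c]
    assms simple_graph_in_V[OF assms(1)] simple_graph_sym[OF assms(1)] by auto

lemma exists_neighbour_on_detour:
  assumes G: "simple_graph V E" and n2K2: "\<not> has_induced V E K2K2_V K2K2_E"
    and P: "is_detour V E P" and v: "v \<in> V" "v \<notin> set P" and vw: "E v w"
  shows "\<exists>j<length P. E v (P ! j)"
proof (rule ccontr)
  assume no_nb: "\<not> ?thesis"
  then have "\<forall>u\<in>set P. \<not> E v u"
    by (auto simp: in_set_conv_nth)
  then have w: "w \<in> V" "w \<notin> set P" "w \<noteq> v"
    using vw simple_graph_in_V[OF G] simple_graph_irrefl[OF G] by blast+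
  have longest: "length q \<le> length P" if "is_path V E q" for q
    using P that by (simp add: is_detour_def)
  have path_P: "is_path V E P"
    using P by (simp add: is_detour_def)
  then obtain a P' where P_eq: "P = a # P'"
    by (cases P) (auto simp: is_path_def)
  show False
  proof (cases P')
    case Nil
    have "is_path V E [v, w]"
      using v w vw by (simp add: is_path_iff_successively)
    then show False
      using longest P_eq Nil by fastforce
  next
    case (Cons b P'')
    have "\<not> E v a" "\<not> E v b"
      using no_nb P_eq Cons by force+
    moreover have "\<not> E w a"
    proof
      assume "E w a"
      then have "is_path V E (w # P)"
        using path_P w P_eq by (auto simp: is_path_iff_successively)
      then show False
        using longest by fastforce
    qed
    moreover have "\<not> E w b"
    proof
      assume "E w b"
      then have "is_path V E (v # w # P')"
        using path_P v w vw P_eq Cons by (auto simp: is_path_iff_successively)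
      then show False
        using longest P_eq by fastforce
    qed
    moreover have "distinct [v, w, a, b]"
      using path_P v w P_eq Cons by (auto simp: is_path_def)
    ultimately show False
      using disjoint_edges_joined_if_2K2_free[OF G n2K2 _ vw, of a b] path_P P_eq Cons
      by (auto simp: is_path_iff_successively)
  qed
qed

lemma path_vertex_adjacent_across_gap:
  assumes G: "simple_graph V E" and nP4: "\<not> has_induced V E P4_V P4_E"
    and P: "is_path V E P" and v: "v \<in> V" "v \<notin> set P"
    and vj: "E v (P ! j)" and m: "m \<le> length P"
    and skipped: "\<And>i. j < i \<Longrightarrow> i < m \<Longrightarrow> \<not> E v (P ! i)"
    and i: "j < i" "i < m"
  shows "E (P ! j) (P ! i)"
  using i(1)[unfolded Suc_le_eq[symmetric]] i(2)
proof (induction rule: dec_induct)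
  case base
  then show ?case
    using P m by (simp add: is_path_def)
next
  case (step i)
  show ?case
  proof (rule ccontr)
    assume "\<not> ?case"
    moreover have "E (P ! i) (P ! Suc i)"
      using P step.prems m by (simp add: is_path_def)
    moreover have "distinct [v, P ! j, P ! i, P ! Suc i]"
      using P v step.hyps step.prems m by (auto simp: is_path_def nth_eq_iff_index_eq)
    moreover have "{v, P ! j, P ! i, P ! Suc i} \<subseteq> V"
      using P v step.hyps step.prems m by (auto simp: is_path_def)
    ultimately show False
      using has_induced_P4I[OF G, of v "P ! j" "P ! i" "P ! Suc i"] nP4 vj step skipped
      by auto
  qed
qed

lemma successively_upt_append:
  "successively R ([a..<b] @ xs) \<longleftrightarrow>
     successively R [a..<b] \<and> successively R xs \<and> (b \<le> a \<or> xs = [] \<or> R (b - 1) (hd xs))"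
  by (cases "a < b") (auto simp: successively_append_iff)

lemma successively_Cons_upt:
  "successively R (x # [a..<b]) \<longleftrightarrow> successively R [a..<b] \<and> (b \<le> a \<or> R x a)"
  by (cases "a < b") (auto simp: successively_Cons)

lemma is_path_map_nth:
  assumes "distinct B" "set B \<subseteq> V" "L \<noteq> []" "distinct L" "set L \<subseteq> {..<length B}"
    "successively (\<lambda>a b. E (B ! a) (B ! b)) L"
  shows "is_path V E (map ((!) B) L)"
proof -
  have "inj_on ((!) B) (set L)"
    using assms(1,5) by (intro inj_on_nth) auto
  moreover have "set (map ((!) B) L) \<subseteq> V"
    using assms(2,5) by (auto dest!: nth_mem[of _ B])
  ultimately show ?thesis
    using assms(3,4,6) by (simp add: is_path_iff_successively distinct_map successively_map)
qed

lemma path_through_vertex_adjacent_to_path: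
  assumes G: "simple_graph V E" and nP4: "\<not> has_induced V E P4_V P4_E"
    and n2K2: "\<not> has_induced V E K2K2_V K2K2_E"
    and P: "is_path V E P" and v: "v \<in> V" "v \<notin> set P"
    and j: "j < length P" and vj: "E v (P ! j)"
  shows "\<exists>Q. is_path V E Q \<and> v \<in> set Q \<and> length P \<le> length Q"
proof -
  \<comment> \<open>Rerouted paths are given as lists of indices into B, turning distinctness into arithmetic.\<close>
  define k where "k = length P"
  define B where "B = P @ [v]"
  define F where "F a b \<longleftrightarrow> E (B ! a) (B ! b)" for a b
  have B_P: "B ! i = P ! i" if "i < k" for i
    using that by (simp add: B_def k_def nth_append)
  have B_k: "B ! k = v"
    by (simp add: B_def k_def)
  have index_path: "\<exists>Q. is_path V E Q \<and> v \<in> set Q \<and> length P \<le> length Q"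
    if L: "distinct L" "set L \<subseteq> {..k}" "k \<in> set L" "k \<le> length L" "successively F L" for L
  proof (intro exI conjI)
    show "is_path V E (map ((!) B) L)"
      using P v L by (intro is_path_map_nth) (auto simp: B_def k_def is_path_def F_def)
    show "v \<in> set (map ((!) B) L)"
      using L(3) B_k by force
    show "length P \<le> length (map ((!) B) L)"
      using L(4) by (simp add: k_def)
  qed
  have along: "F i (Suc i)" if "Suc i < k" for i
    using P that B_P by (simp add: F_def k_def is_path_def)
  have segment: "successively F [a..<b]" if "b \<le> k" for a b
    using that along by (auto simp: successively_conv_nth)
  have F_jk: "F j k" "F k j"
    using vj j B_P B_k simple_graph_sym[OF G] by (auto simp: F_def k_def)
  have into_j: "F (j - 1) j" if "0 < j"
    using along[of "j - 1"] that j by (simp add: k_def)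
  obtain m where m: "j < m" "m \<le> k" "m = k \<or> F k m"
    and skipped: "\<And>i. j < i \<Longrightarrow> i < m \<Longrightarrow> \<not> E v (P ! i)"
  proof -
    have "\<exists>m. j < m \<and> (m = k \<or> m < k \<and> E v (P ! m))"
      using j by (auto simp: k_def)
    then obtain m where "j < m" "m = k \<or> m < k \<and> E v (P ! m)"
      and "\<forall>i<m. \<not> (j < i \<and> (i = k \<or> i < k \<and> E v (P ! i)))"
      by (subst (asm) exists_least_iff) blast
    then show thesis
      using that[of m] B_P B_k by (auto simp: F_def)
  qed
  consider "m \<le> j + 2" | "j \<le> 1" | "2 \<le> j" "j + 3 \<le> m"
    by linarith
  then show ?thesis
  proof cases
    case 1
    then show ?thesis
      using F_jk into_j m segment
      by (intro index_path[of "[0..<Suc j] @ k # [m..<k]"])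
        (auto simp: successively_upt_append successively_Cons_upt)
  next
    case 2
    then show ?thesis
      using F_jk m segment
      by (intro index_path[of "k # [j..<k]"]) (auto simp: successively_Cons_upt)
  next
    case 3
    have "E (P ! j) (P ! (m - 1))"
      using skipped m 3 by (intro path_vertex_adjacent_across_gap[OF G nP4 P v vj, of m])
        (auto simp: k_def)
    then have back_to_j: "F (m - 1) j"
      using m 3 B_P simple_graph_sym[OF G] by (simp add: F_def)
    have "F (j - 1) (j + 1) \<or> F (j - 1) (j + 2) \<or> F (j - 2) (j + 1)"
    proof -
      have "distinct [P ! (j - 2), P ! (j - 1), P ! (j + 1), P ! (j + 2)]"
        using P m 3 by (auto simp: is_path_def nth_eq_iff_index_eq k_def)
      moreover have "F (j - 2) (j - 1)" "F (j + 1) (j + 2)"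
        using along[of "j - 2"] along[of "j + 1"] m 3 by (simp_all add: numeral_2_eq_2 Suc_diff_Suc)
      ultimately show ?thesis
        using disjoint_edges_joined_if_P4_2K2_free[OF G nP4 n2K2,
            of "P ! (j - 2)" "P ! (j - 1)" "P ! (j + 1)" "P ! (j + 2)"] m 3 B_P
        by (simp add: F_def)
    qed
    then obtain s t where st: "0 < s" "s \<le> j" "j < t" "t \<le> s + 2" "t < m" "F (s - 1) t"
    proof (elim disjE)
      assume "F (j - 1) (j + 1)"
      with 3 show thesis by (intro that[of j "j + 1"]) auto
    next
      assume "F (j - 1) (j + 2)"
      with 3 show thesis by (intro that[of j "j + 2"]) auto
    next
      assume "F (j - 2) (j + 1)"
      with 3 show thesis by (intro that[of "j - 1" "j + 1"]) (auto simp: numeral_2_eq_2)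
    qed
    let ?L = "[0..<s] @ [t..<m] @ [j, k] @ [m..<k]"
    have "successively F ?L"
      using F_jk m st back_to_j segment
      by (auto simp: successively_upt_append successively_Cons_upt)
    moreover have "distinct ?L" "set ?L \<subseteq> {..k}" "k \<in> set ?L" "k \<le> length ?L"
      using m st by auto
    ultimately show ?thesis
      by (intro index_path)
  qed
qed

theorem theorem10:
  fixes V :: "'a set" and E :: "'a \<Rightarrow> 'a \<Rightarrow> bool"
  assumes "simple_graph V E"
    and "connected_graph V E"
    and "\<not> has_induced V E P4_V P4_E"
    and "\<not> has_induced V E K2K2_V K2K2_E"
  shows "detour_covered V E"
  unfolding detour_covered_def
proof
  fix x assume x: "x \<in> V"
  obtain P where P: "is_detour V E P"
    using exists_detour[OF assms(1)] x by blast
  show "\<exists>p. is_detour V E p \<and> x \<in> set p"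
  proof (cases "x \<in> set P")
    case True
    with P show ?thesis by blast
  next
    case False
    have "hd P \<in> set P" "set P \<subseteq> V"
      using P by (auto simp: is_detour_def is_path_def)
    then obtain w where "E x w"
      using connected_graph_has_neighbour[OF assms(2) _ x, of "hd P"] False by blast
    then obtain j where "j < length P" "E x (P ! j)"
      using exists_neighbour_on_detour[OF assms(1,4) P x False] by blast
    then obtain Q where Q: "is_path V E Q" "x \<in> set Q" "length P \<le> length Q"
      using path_through_vertex_adjacent_to_path[OF assms(1,3,4) _ x False] P by (auto simp: is_detour_def)
    then have "is_detour V E Q"
      using P by (fastforce simp: is_detour_def)
    with Q show ?thesis by blast
  qed
qed

end
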